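(* Let $E_1,\dots,E_N$ be a symmetric sequence of events with probability functions $P_k$ and correlation functions $G_k$. Then for every $k\in\{1,\dots,N\}$ and all $r_1,\dots,r_k\in\{0,1\}$, $$P_k(r_1,\dots,r_k)=\sum_{\pi}\prod_{B\in\pi}G_{|B|}(r_B),$$ where $\pi$ runs over all set partitions of $\{1,\dots,k\}$ into nonempty blocks, and for a block $B=\{i_1<\dots<i_m\}$ we write $r_B:=(r_{i_1},\dots,r_{i_m})$. Equivalently, $G_k(r_1,\dots,r_k)$ equals $P_k(r_1,\dots,r_k)$ minus the sum of $\prod_{B\in\pi}G_{|B|}(r_B)$ over all set partitions $\pi$ of $\{1,\dots,k\}$ with at least two blocks.
   Context: $\mathbbm{1}_E$ is the indicator function of an event $E$. A finite sequence of events $E_1,\dots,E_N$ on a common probability space is called symmetric if for all $r_1,\dots,r_N\in\{0,1\}$ and all permutations $\sigma$ of $\{1,\dots,N\}$, $P(\mathbbm{1}_{E_1}=r_1,\dots,\mathbbm{1}_{E_N}=r_N)=P(\mathbbm{1}_{E_1}=r_{\sigma(1)},\dots,\mathbbm{1}_{E_N}=r_{\sigma(N)})$. For $1\le k\le N$ the probability function of order $k$ is $P_k(r_1,\dots,r_k):=\sum_{r_{k+1},\dots,r_N\in\{0,1\}}P(\mathbbm{1}_{E_1}=r_1,\dots,\mathbbm{1}_{E_N}=r_N)$. The correlation functions $G_k:\{0,1\}^k\to\mathbb{R}$ are defined by $G_1:=P_1$ and, recursively for $1<k\le N$, $$G_k(r_1,\dots,r_k):=P_k(r_1,\dots,r_k)-\sum_{\sigma}\sum_{l=1}^{k-1}\frac{1}{(l-1)!\,(k-l)!}G_l(r_1,r_{\sigma(2)},\dots,r_{\sigma(l)})\,P_{k-l}(r_{\sigma(l+1)},\dots,r_{\sigma(k)}),$$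 where $\sigma$ runs over all permutations of $\{2,\dots,k\}$. *)

theory Defs
  imports "HOL-Probability.Probability" "HOL-Combinatorics.Permutations" "HOL-Library.Disjoint_Sets"
begin

text \<open>Tuples (r_1,...,r_k) are represented as functions r :: nat \<Rightarrow> nat, of which
  only the values r 1, ..., r k are relevant; entries are meant to lie in {0,1}.\<close>

definition jointP :: "'a measure \<Rightarrow> (nat \<Rightarrow> 'a set) \<Rightarrow> nat \<Rightarrow> (nat \<Rightarrow> nat) \<Rightarrow> real" where
  "jointP M E N r = measure M {\<omega> \<in> space M. \<forall>i\<in>{1..N}. indicator (E i) \<omega> = real (r i)}"

definition symmetric_events :: "'a measure \<Rightarrow> (nat \<Rightarrow> 'a set) \<Rightarrow> nat \<Rightarrow> bool" where
  "symmetric_events M E N \<longleftrightarrow>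
     (\<forall>r \<sigma>. (\<forall>i\<in>{1..N}. r i \<in> {0,1}) \<longrightarrow> \<sigma> permutes {1..N} \<longrightarrow>
        jointP M E N r = jointP M E N (r \<circ> \<sigma>))"

definition probP :: "'a measure \<Rightarrow> (nat \<Rightarrow> 'a set) \<Rightarrow> nat \<Rightarrow> nat \<Rightarrow> (nat \<Rightarrow> nat) \<Rightarrow> real" where
  "probP M E N k r = (\<Sum>s\<in>PiE {k+1..N} (\<lambda>_. {0::nat,1}).
      jointP M E N (\<lambda>i. if i \<le> k then r i else s i))"

function corrG :: "(nat \<Rightarrow> (nat \<Rightarrow> nat) \<Rightarrow> real) \<Rightarrow> nat \<Rightarrow> (nat \<Rightarrow> nat) \<Rightarrow> real" where
  "corrG P k r =
    (if k \<le> 1 then P k r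
     else P k r -
       (\<Sum>\<sigma>\<in>{\<sigma>. \<sigma> permutes {2..k}}. \<Sum>l\<in>{1..k-1}.
          (1 / (fact (l - 1) * fact (k - l))) *
          corrG P l (\<lambda>j. if j = 1 then r 1 else r (\<sigma> j)) *
          P (k - l) (\<lambda>j. r (\<sigma> (l + j)))))"
  by pat_completeness auto
termination
  by (relation "Wellfounded.measure (\<lambda>(P, k, r). k)") auto

definition subtuple :: "(nat \<Rightarrow> nat) \<Rightarrow> nat set \<Rightarrow> nat \<Rightarrow> nat" where
  "subtuple r B = (\<lambda>j. r (sorted_list_of_set B ! (j - 1)))"

end

theory Submission
  imports Defs
begin

text \<open>
  For a finite index set \<open>T\<close> write \<open>P(T)\<close> and \<open>G(T)\<close> for the functions of order \<open>|T|\<close>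
  applied to the entries of \<open>r\<close> indexed by \<open>T\<close> (\<open>block_value\<close>). The defining recursion
  of \<open>G k\<close> singles out index 1 and averages over the permutations \<open>\<sigma>\<close> of \<open>{2..k}\<close>; grouping
  them by \<open>S = \<sigma> ` {2..l}\<close>, each set of size \<open>l - 1\<close> occurs \<open>(l - 1)! (k - l)!\<close> times. Hence,
  once \<open>G l\<close> is symmetric for \<open>l < k\<close>, the recursion reads
  \<open>G(T) = P(T) - \<Sum>\<^sub>S G({t} \<union> S) P(T - {t} - S)\<close>, summed over the proper subsets \<open>S\<close> of
  \<open>T - {t}\<close>, where \<open>t = Min T\<close>. Splitting a set partition of \<open>T\<close> according to the block that
  contains \<open>t\<close>, and expanding \<open>P\<close> on the smaller sets \<open>T - {t} - S\<close>, yields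
  \<open>P(T) = \<Sum>\<^sub>\<pi> \<Prod>\<^sub>B\<^sub>\<in>\<^sub>\<pi> G(B)\<close>. This in turn writes \<open>G k\<close> as \<open>P k\<close> minus a sum over
  partitions of \<open>{1..k}\<close> into smaller blocks, which is invariant under permutations of
  \<open>{1..k}\<close>; so \<open>G k\<close> is symmetric too. Symmetry and expansion are therefore proved
  together by induction on \<open>k\<close>.
\<close>

declare corrG.simps [simp del]

definition tuple_local :: "nat \<Rightarrow> ((nat \<Rightarrow> nat) \<Rightarrow> real) \<Rightarrow> bool" where
  "tuple_local n H \<longleftrightarrow> (\<forall>q q'. (\<forall>i\<in>{1..n}. q i = q' i) \<longrightarrow> H q = H q')"

definition tuple_symmetric :: "nat \<Rightarrow> ((nat \<Rightarrow> nat) \<Rightarrow> real) \<Rightarrow> bool" where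
  "tuple_symmetric n H \<longleftrightarrow> (\<forall>q \<tau>. \<tau> permutes {1..n} \<longrightarrow> H (q \<circ> \<tau>) = H q)"

lemma tuple_localD: "tuple_local n H \<Longrightarrow> (\<And>i. i \<in> {1..n} \<Longrightarrow> q i = q' i) \<Longrightarrow> H q = H q'"
  unfolding tuple_local_def by blast

lemma tuple_symmetricD: "tuple_symmetric n H \<Longrightarrow> \<tau> permutes {1..n} \<Longrightarrow> H (q \<circ> \<tau>) = H q"
  unfolding tuple_symmetric_def by blast

lemma tuple_symmetric_comp_bij_eq:
  assumes loc: "tuple_local n H" and sym: "tuple_symmetric n H"
    and f: "bij_betw f {1..n} U" and g: "bij_betw g {1..n} U"
  shows "H (r \<circ> f) = H (r \<circ> g)"
proof -
  define \<tau> where "\<tau> x = (if x \<in> {1..n} then inv_into {1..n} g (f x) else x)" for x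
  have "bij_betw (inv_into {1..n} g \<circ> f) {1..n} {1..n}"
    using f g bij_betw_inv_into bij_betw_trans by blast
  then have "bij_betw \<tau> {1..n} {1..n}"
    by (rule bij_betw_cong[THEN iffD1, rotated]) (simp add: \<tau>_def)
  then have \<tau>: "\<tau> permutes {1..n}"
    by (rule bij_imp_permutes) (auto simp: \<tau>_def)
  have "H (r \<circ> f) = H ((r \<circ> g) \<circ> \<tau>)"
  proof (rule tuple_localD[OF loc])
    fix i assume i: "i \<in> {1..n}"
    then have "f i \<in> g ` {1..n}"
      using bij_betw_apply[OF f] bij_betw_imp_surj_on[OF g] by blast
    then show "(r \<circ> f) i = (r \<circ> g \<circ> \<tau>) i"
      using i by (simp add: \<tau>_def f_inv_into_f)
  qed
  also have "\<dots> = H (r \<circ> g)"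
    by (rule tuple_symmetricD[OF sym \<tau>])
  finally show ?thesis .
qed

lemma subtuple_eq_comp: "subtuple r U = r \<circ> (\<lambda>j. sorted_list_of_set U ! (j - 1))"
  by (simp add: subtuple_def o_def)

lemma bij_betw_sorted_list_of_set_nth:
  assumes "finite U"
  shows "bij_betw (\<lambda>j. sorted_list_of_set U ! (j - 1)) {1..card U} U"
proof -
  have "bij_betw (\<lambda>j. j - 1) {1..card U} {..<card U}"
    by (rule bij_betw_byWitness[where f' = Suc]) auto
  moreover have "bij_betw ((!) (sorted_list_of_set U)) {..<card U} U"
    by (rule bij_betw_nth) (use assms in auto)
  ultimately show ?thesis
    using bij_betw_trans by (fastforce simp: o_def)
qed

lemma subtuple_atLeastAtMost: "i \<in> {1..k} \<Longrightarrow> subtuple r {1..k} i = r i"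
proof -
  assume i: "i \<in> {1..k}"
  have "sorted_list_of_set {1..k} = [1..<Suc k]"
    by (simp add: atLeastLessThanSuc_atLeastAtMost[symmetric])
  then show ?thesis
    using i by (simp del: upt_Suc add: subtuple_def)
qed

definition block_value :: "(nat \<Rightarrow> (nat \<Rightarrow> nat) \<Rightarrow> real) \<Rightarrow> (nat \<Rightarrow> nat) \<Rightarrow> nat set \<Rightarrow> real" where
  "block_value F r B = F (card B) (subtuple r B)"

lemma block_value_atLeastAtMost:
  assumes "tuple_local k (F k)"
  shows "block_value F r {1..k} = F k r"
proof -
  have "F k (subtuple r {1..k}) = F k r"
    by (rule tuple_localD[OF assms]) (rule subtuple_atLeastAtMost)
  then show ?thesis
    by (simp add: block_value_def)
qed

lemma block_value_eq_comp_bij: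
  assumes "tuple_local n (F n)" "tuple_symmetric n (F n)" and f: "bij_betw f {1..n} U"
  shows "F n (r \<circ> f) = block_value F r U"
proof -
  have U: "finite U" "card U = n"
    using bij_betw_finite[OF f] bij_betw_same_card[OF f] by auto
  have "F n (r \<circ> f) = F n (r \<circ> (\<lambda>j. sorted_list_of_set U ! (j - 1)))"
    using assms bij_betw_sorted_list_of_set_nth[OF U(1)] U(2)
    by (intro tuple_symmetric_comp_bij_eq) auto
  then show ?thesis
    by (simp add: block_value_def subtuple_eq_comp U)
qed

lemma block_value_comp_inj:
  assumes "tuple_local (card U) (F (card U))" "tuple_symmetric (card U) (F (card U))"
    and "finite U" "inj_on e U"
  shows "block_value F (r \<circ> e) U = block_value F r (e ` U)"
proof -
  have "bij_betw (e \<circ> (\<lambda>j. sorted_list_of_set U ! (j - 1))) {1..card U} (e ` U)"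
    by (rule bij_betw_trans[OF bij_betw_sorted_list_of_set_nth[OF assms(3)]
          inj_on_imp_bij_betw[OF assms(4)]])
  from block_value_eq_comp_bij[where F = F and n = "card U", OF assms(1,2) this, of r] show ?thesis
    by (simp add: block_value_def subtuple_eq_comp o_assoc)
qed

lemma corrG_le_1: "k \<le> 1 \<Longrightarrow> corrG P k r = P k r"
  by (subst corrG.simps) simp

lemma corrG_unfold:
  assumes "2 \<le> k"
  shows "corrG P k r = P k r -
    (\<Sum>\<sigma>\<in>{\<sigma>. \<sigma> permutes {2..k}}. \<Sum>l\<in>{1..k-1}.
       1 / (fact (l - 1) * fact (k - l)) * corrG P l (r \<circ> \<sigma>) * P (k - l) (r \<circ> \<sigma> \<circ> (+) l))"
proof -
  have "(\<lambda>j. if j = 1 then r 1 else r (\<sigma> j)) = r \<circ> \<sigma>" if "\<sigma> permutes {2..k}" for \<sigma>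
    using permutes_not_in[OF that, of 1] by (auto simp: fun_eq_iff)
  then show ?thesis
    using assms by (subst corrG.simps) (auto intro!: sum.cong simp: o_def)
qed

lemma corrG_local:
  assumes "\<And>n. tuple_local n (P n)"
  shows "tuple_local k (corrG P k)"
proof (induction k rule: less_induct)
  case (less k)
  show ?case
    unfolding tuple_local_def
  proof (intro allI impI)
    fix q q' :: "nat \<Rightarrow> nat"
    assume agree: "\<forall>i\<in>{1..k}. q i = q' i"
    show "corrG P k q = corrG P k q'"
    proof (cases "k \<le> 1")
      case True
      then show ?thesis
        using tuple_localD[OF assms, of k q q'] agree by (simp add: corrG_le_1)
    next
      case False
      have agree_\<sigma>: "(q \<circ> \<sigma>) i = (q' \<circ> \<sigma>) i" if "\<sigma> permutes {2..k}" "i \<in> {1..k}" for \<sigma> i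
      proof -
        have "\<sigma> permutes {1..k}"
          using that(1) by (rule permutes_subset) auto
        then have "\<sigma> i \<in> {1..k}"
          using that(2) by (simp only: permutes_in_image)
        then show ?thesis
          using agree by simp
      qed
      have "corrG P l (q \<circ> \<sigma>) * P (k - l) (q \<circ> \<sigma> \<circ> (+) l)
          = corrG P l (q' \<circ> \<sigma>) * P (k - l) (q' \<circ> \<sigma> \<circ> (+) l)"
        if "\<sigma> permutes {2..k}" "l \<in> {1..k-1}" for \<sigma> l
      proof -
        have "corrG P l (q \<circ> \<sigma>) = corrG P l (q' \<circ> \<sigma>)"
          using that by (intro tuple_localD[OF less.IH] agree_\<sigma>) auto
        moreover have "P (k - l) (q \<circ> \<sigma> \<circ> (+) l) = P (k - l) (q' \<circ> \<sigma> \<circ> (+) l)"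
        proof (rule tuple_localD[OF assms])
          fix i assume "i \<in> {1..k - l}"
          then have "l + i \<in> {1..k}"
            using that(2) by auto
          then show "(q \<circ> \<sigma> \<circ> (+) l) i = (q' \<circ> \<sigma> \<circ> (+) l) i"
            using agree_\<sigma>[OF that(1)] by simp
        qed
        ultimately show ?thesis by simp
      qed
      moreover have "P k q = P k q'"
        using agree by (intro tuple_localD[OF assms]) auto
      ultimately show ?thesis
        using False by (simp only: corrG_unfold mult.assoc) (intro arg_cong2[where f = minus] sum.cong; simp)
    qed
  qed
qed

lemma permutes_image_exists:
  assumes A: "finite A" and B: "B \<subseteq> A" and S: "S \<subseteq> A" and card: "card S = card B"
  obtains \<sigma> where "\<sigma> permutes A" "\<sigma> ` B = S"
proof -
  have fin: "finite B" "finite S"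
    using A B S finite_subset by auto
  obtain g where g: "bij_betw g B S"
    using finite_same_card_bij[OF fin] card by auto
  have "card (A - B) = card (A - S)"
    using A B S card by (simp add: card_Diff_subset fin)
  then obtain h where h: "bij_betw h (A - B) (A - S)"
    using finite_same_card_bij A by (meson finite_Diff)
  define \<sigma> where "\<sigma> x = (if x \<in> B then g x else if x \<in> A then h x else x)" for x
  have "bij_betw (\<lambda>x. if x \<in> B then g x else h x) (B \<union> (A - B)) (S \<union> (A - S))"
    by (rule bij_betw_disjoint_Un[OF g h]) auto
  moreover have "B \<union> (A - B) = A" "S \<union> (A - S) = A"
    using B S by auto
  ultimately have "bij_betw \<sigma> A A"
    by (auto simp: \<sigma>_def elim!: bij_betw_cong[THEN iffD1, rotated])
  then have "\<sigma> permutes A"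
    by (rule bij_imp_permutes) (use B in \<open>auto simp: \<sigma>_def\<close>)
  moreover have "\<sigma> ` B = S"
    using g by (simp add: \<sigma>_def bij_betw_def)
  ultimately show thesis ..
qed

lemma card_permutes_image_eq:
  assumes "finite A" "B \<subseteq> A" "S \<subseteq> A" "card S = card B"
  shows "card {\<sigma>. \<sigma> permutes A \<and> \<sigma> ` B = S} = card {\<sigma>. \<sigma> permutes A \<and> \<sigma> ` B = B}"
proof -
  obtain \<sigma>\<^sub>0 where \<sigma>\<^sub>0: "\<sigma>\<^sub>0 permutes A" "\<sigma>\<^sub>0 ` B = S"
    using permutes_image_exists[OF assms] .
  have inv_image: "inv \<sigma>\<^sub>0 ` S = B"
    using \<sigma>\<^sub>0 permutes_inj[OF \<sigma>\<^sub>0(1)] by (auto simp: image_inv_f_f)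
  have "bij_betw ((\<circ>) \<sigma>\<^sub>0) {\<sigma>. \<sigma> permutes A \<and> \<sigma> ` B = B} {\<sigma>. \<sigma> permutes A \<and> \<sigma> ` B = S}"
  proof (rule bij_betw_byWitness[where f' = "(\<circ>) (inv \<sigma>\<^sub>0)"])
    show "\<forall>\<tau>\<in>{\<sigma>. \<sigma> permutes A \<and> \<sigma> ` B = B}. inv \<sigma>\<^sub>0 \<circ> (\<sigma>\<^sub>0 \<circ> \<tau>) = \<tau>"
      using permutes_inv_o(2)[OF \<sigma>\<^sub>0(1)] by (simp add: o_assoc)
    show "\<forall>\<tau>\<in>{\<sigma>. \<sigma> permutes A \<and> \<sigma> ` B = S}. \<sigma>\<^sub>0 \<circ> (inv \<sigma>\<^sub>0 \<circ> \<tau>) = \<tau>"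
      using permutes_inv_o(1)[OF \<sigma>\<^sub>0(1)] by (simp add: o_assoc)
    show "(\<circ>) \<sigma>\<^sub>0 ` {\<sigma>. \<sigma> permutes A \<and> \<sigma> ` B = B} \<subseteq> {\<sigma>. \<sigma> permutes A \<and> \<sigma> ` B = S}"
    proof (rule image_subsetI)
      fix \<tau> assume "\<tau> \<in> {\<sigma>. \<sigma> permutes A \<and> \<sigma> ` B = B}"
      then have \<tau>: "\<tau> permutes A" "\<tau> ` B = B" by auto
      then have "(\<sigma>\<^sub>0 \<circ> \<tau>) ` B = S"
        using \<sigma>\<^sub>0(2) by (simp only: image_comp[symmetric])
      then show "\<sigma>\<^sub>0 \<circ> \<tau> \<in> {\<sigma>. \<sigma> permutes A \<and> \<sigma> ` B = S}"
        using \<tau>(1) \<sigma>\<^sub>0(1) by (simp add: permutes_compose)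
    qed
    show "(\<circ>) (inv \<sigma>\<^sub>0) ` {\<sigma>. \<sigma> permutes A \<and> \<sigma> ` B = S} \<subseteq> {\<sigma>. \<sigma> permutes A \<and> \<sigma> ` B = B}"
    proof (rule image_subsetI)
      fix \<tau> assume "\<tau> \<in> {\<sigma>. \<sigma> permutes A \<and> \<sigma> ` B = S}"
      then have \<tau>: "\<tau> permutes A" "\<tau> ` B = S" by auto
      then have "(inv \<sigma>\<^sub>0 \<circ> \<tau>) ` B = B"
        using inv_image by (simp only: image_comp[symmetric])
      then show "inv \<sigma>\<^sub>0 \<circ> \<tau> \<in> {\<sigma>. \<sigma> permutes A \<and> \<sigma> ` B = B}"
        using \<tau>(1) permutes_inv[OF \<sigma>\<^sub>0(1)] by (simp add: permutes_compose)
    qed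
  qed
  then show ?thesis
    by (simp add: bij_betw_same_card)
qed

lemma sum_permutes_image_eq_card_mult:
  fixes F :: "'a set \<Rightarrow> 'b::comm_semiring_1"
  assumes A: "finite A" and B: "B \<subseteq> A"
  shows "(\<Sum>\<sigma>\<in>{\<sigma>. \<sigma> permutes A}. F (\<sigma> ` B))
    = of_nat (card {\<sigma>. \<sigma> permutes A \<and> \<sigma> ` B = B}) * (\<Sum>S\<in>{S. S \<subseteq> A \<and> card S = card B}. F S)"
proof -
  have "(\<lambda>\<sigma>. \<sigma> ` B) ` {\<sigma>. \<sigma> permutes A} = {S. S \<subseteq> A \<and> card S = card B}"
  proof (intro equalityI subsetI)
    fix S assume "S \<in> (\<lambda>\<sigma>. \<sigma> ` B) ` {\<sigma>. \<sigma> permutes A}"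
    then obtain \<sigma> where "\<sigma> permutes A" "S = \<sigma> ` B" by blast
    then show "S \<in> {S. S \<subseteq> A \<and> card S = card B}"
      using B permutes_image[of \<sigma> A] card_image[OF inj_on_subset[OF permutes_inj]] by auto
  next
    fix S assume "S \<in> {S. S \<subseteq> A \<and> card S = card B}"
    then show "S \<in> (\<lambda>\<sigma>. \<sigma> ` B) ` {\<sigma>. \<sigma> permutes A}"
      using permutes_image_exists[OF A B] by (metis (mono_tags, lifting) image_eqI mem_Collect_eq)
  qed
  then have "(\<Sum>\<sigma>\<in>{\<sigma>. \<sigma> permutes A}. F (\<sigma> ` B))
      = (\<Sum>S\<in>{S. S \<subseteq> A \<and> card S = card B}. of_nat (card {\<sigma>. \<sigma> permutes A \<and> \<sigma> ` B = S}) * F S)"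
    using sum.image_gen[OF finite_permutations[OF A], of "\<lambda>\<sigma>. F (\<sigma> ` B)" "\<lambda>\<sigma>. \<sigma> ` B"]
    by (simp add: conj_commute)
  also have "\<dots> = (\<Sum>S\<in>{S. S \<subseteq> A \<and> card S = card B}.
      of_nat (card {\<sigma>. \<sigma> permutes A \<and> \<sigma> ` B = B}) * F S)"
    using card_permutes_image_eq[OF A B] by (intro sum.cong) auto
  finally show ?thesis
    by (simp add: sum_distrib_left)
qed

lemma card_permutes_image_fixed:
  assumes A: "finite A" and B: "B \<subseteq> A"
  shows "card {\<sigma>. \<sigma> permutes A \<and> \<sigma> ` B = B} = fact (card B) * fact (card A - card B)"
proof -
  have le: "card B \<le> card A"
    using A B by (rule card_mono)
  have "fact (card A) = card {\<sigma>. \<sigma> permutes A \<and> \<sigma> ` B = B} * (card A choose card B)"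
    using sum_permutes_image_eq_card_mult[OF A B, of "\<lambda>_. 1 :: nat"] A
    by (simp add: card_permutations n_subsets)
  moreover have "fact (card A) = fact (card B) * fact (card A - card B) * (card A choose card B)"
    using binomial_fact_lemma[OF le] by simp
  moreover have "(card A choose card B) > 0"
    using le by simp
  ultimately show ?thesis
    by simp
qed

lemma sum_permutes_image:
  fixes F :: "'a set \<Rightarrow> 'b::{comm_semiring_1,semiring_char_0}"
  assumes "finite A" "B \<subseteq> A"
  shows "(\<Sum>\<sigma>\<in>{\<sigma>. \<sigma> permutes A}. F (\<sigma> ` B))
    = fact (card B) * fact (card A - card B) * (\<Sum>S\<in>{S. S \<subseteq> A \<and> card S = card B}. F S)"
  using sum_permutes_image_eq_card_mult[OF assms, of F] card_permutes_image_fixed[OF assms]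
  by simp

lemma sum_proper_subsets_by_card:
  assumes "finite A"
  shows "(\<Sum>m<card A. \<Sum>S\<in>{S. S \<subseteq> A \<and> card S = m}. F S) = (\<Sum>S\<in>Pow A - {A}. F S)"
proof -
  have "card S < card A" if "S \<in> Pow A - {A}" for S
    using that assms by (auto intro: psubset_card_mono)
  moreover have "{S \<in> Pow A - {A}. card S = m} = {S. S \<subseteq> A \<and> card S = m}" if "m < card A" for m
    using that by auto
  ultimately show ?thesis
    using sum.group[of "Pow A - {A}" "{..<card A}" card F] assms by auto
qed

definition block_of :: "'a set set \<Rightarrow> 'a \<Rightarrow> 'a set" where
  "block_of \<pi> t = (THE B. B \<in> \<pi> \<and> t \<in> B)"

lemma block_of_eq:
  assumes "partition_on A \<pi>" "B \<in> \<pi>" "t \<in> B"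
  shows "block_of \<pi> t = B"
  unfolding block_of_def
proof (rule the_equality)
  fix B' assume "B' \<in> \<pi> \<and> t \<in> B'"
  then show "B' = B"
    using partition_onD2[OF assms(1)] assms(2,3) by (auto dest: disjointD)
qed (use assms in simp)

lemma block_of_mem:
  assumes "partition_on A \<pi>" "t \<in> A"
  shows "block_of \<pi> t \<in> \<pi>" "t \<in> block_of \<pi> t"
proof -
  obtain B where "B \<in> \<pi>" "t \<in> B"
    using partition_onD1[OF assms(1)] assms(2) by auto
  then show "block_of \<pi> t \<in> \<pi>" "t \<in> block_of \<pi> t"
    using block_of_eq[OF assms(1)] by simp_all
qed

lemma sum_partition_on_split:
  fixes g :: "'a set \<Rightarrow> 'b::comm_semiring_1"
  assumes T: "finite T" and t: "t \<in> T"
  shows "(\<Sum>\<pi>\<in>{\<pi>. partition_on T \<pi>}. \<Prod>B\<in>\<pi>. g B) =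
    (\<Sum>S\<in>Pow (T - {t}). g (insert t S) * (\<Sum>\<pi>\<in>{\<pi>. partition_on (T - insert t S) \<pi>}. \<Prod>B\<in>\<pi>. g B))"
proof -
  let ?pairs = "Sigma (Pow (T - {t})) (\<lambda>S. {\<pi>. partition_on (T - insert t S) \<pi>})"
  have "(\<Sum>S\<in>Pow (T - {t}). g (insert t S) * (\<Sum>\<pi>\<in>{\<pi>. partition_on (T - insert t S) \<pi>}. \<Prod>B\<in>\<pi>. g B))
      = (\<Sum>(S, \<pi>)\<in>?pairs. g (insert t S) * (\<Prod>B\<in>\<pi>. g B))"
    unfolding sum_distrib_left by (rule sum.Sigma) (use T finitely_many_partition_on in auto)
  also have "\<dots> = (\<Sum>\<pi>\<in>{\<pi>. partition_on T \<pi>}. \<Prod>B\<in>\<pi>. g B)"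
  proof (rule sum.reindex_bij_witness[where j = "\<lambda>(S, \<pi>). insert (insert t S) \<pi>"
        and i = "\<lambda>\<pi>. (block_of \<pi> t - {t}, \<pi> - {block_of \<pi> t})"])
    fix p assume "p \<in> ?pairs"
    then obtain S \<pi> where p: "p = (S, \<pi>)" and S: "S \<subseteq> T - {t}"
      and \<pi>: "partition_on (T - insert t S) \<pi>" by auto
    have new: "insert t S \<notin> \<pi>"
      using partition_onD1[OF \<pi>] by auto
    have "disjnt (insert t S) (\<Union>\<pi>)"
      using partition_onD1[OF \<pi>] by (auto simp: disjnt_def)
    then have "partition_on T (insert (insert t S) \<pi>)"
      using \<pi> S t by (auto simp: partition_on_insert)
    moreover from this have "block_of (insert (insert t S) \<pi>) t = insert t S"
      by (rule block_of_eq) auto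
    moreover have "insert t S - {t} = S" "insert (insert t S) \<pi> - {insert t S} = \<pi>"
      using S new by auto
    ultimately show "(case p of (S, \<pi>) \<Rightarrow> insert (insert t S) \<pi>) \<in> {\<pi>. partition_on T \<pi>}"
      "(\<lambda>\<pi>. (block_of \<pi> t - {t}, \<pi> - {block_of \<pi> t})) (case p of (S, \<pi>) \<Rightarrow> insert (insert t S) \<pi>) = p"
      using p by simp_all
    have "finite \<pi>"
      using finite_elements[OF _ \<pi>] T by simp
    then show "(\<Prod>B\<in>(case p of (S, \<pi>) \<Rightarrow> insert (insert t S) \<pi>). g B)
        = (case p of (S, \<pi>) \<Rightarrow> g (insert t S) * (\<Prod>B\<in>\<pi>. g B))"
      using p new by simp
  next
    fix \<pi> assume "\<pi> \<in> {\<pi>. partition_on T \<pi>}"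
    then have \<pi>: "partition_on T \<pi>" by simp
    define B where "B = block_of \<pi> t"
    have B: "B \<in> \<pi>" "t \<in> B"
      using block_of_mem[OF \<pi> t] by (simp_all add: B_def)
    have "disjnt B (\<Union>(\<pi> - {B}))"
      using partition_onD2[OF \<pi>] B by (auto simp: disjnt_def dest: disjointD)
    moreover have "partition_on T (insert B (\<pi> - {B}))"
      using \<pi> B by (simp add: insert_absorb)
    ultimately have "partition_on (T - B) (\<pi> - {B})" "B \<subseteq> T"
      by (simp_all only: partition_on_insert)
    then show "(\<lambda>\<pi>. (block_of \<pi> t - {t}, \<pi> - {block_of \<pi> t})) \<pi> \<in> ?pairs"
      "(\<lambda>(S, \<pi>). insert (insert t S) \<pi>) ((\<lambda>\<pi>. (block_of \<pi> t - {t}, \<pi> - {block_of \<pi> t})) \<pi>) = \<pi>"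
      using B by (auto simp: B_def[symmetric] insert_absorb)
  qed
  finally show ?thesis ..
qed

lemma partition_on_card_less_2:
  assumes "partition_on A \<pi>" "finite A" "A \<noteq> {}" "card \<pi> < 2"
  shows "\<pi> = {A}"
proof -
  have "finite \<pi>"
    using finite_elements[OF assms(2,1)] .
  moreover have "\<pi> \<noteq> {}"
    using partition_onD1[OF assms(1)] assms(3) by auto
  ultimately have "card \<pi> = 1"
    using assms(4) card_gt_0_iff[of \<pi>] by linarith
  then obtain B where "\<pi> = {B}"
    by (rule card_1_singletonE)
  then show ?thesis
    using partition_onD1[OF assms(1)] by simp
qed

lemma sum_partition_on_remove_trivial:
  assumes "finite A" "A \<noteq> {}"
  shows "(\<Sum>\<pi>\<in>{\<pi>. partition_on A \<pi>}. f \<pi>) = f {A} + (\<Sum>\<pi>\<in>{\<pi>. partition_on A \<pi> \<and> 2 \<le> card \<pi>}. f \<pi>)"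
proof -
  have "{\<pi>. partition_on A \<pi>} = insert {A} {\<pi>. partition_on A \<pi> \<and> 2 \<le> card \<pi>}"
  proof (intro set_eqI iffI)
    fix \<pi> assume "\<pi> \<in> {\<pi>. partition_on A \<pi>}"
    then show "\<pi> \<in> insert {A} {\<pi>. partition_on A \<pi> \<and> 2 \<le> card \<pi>}"
      using partition_on_card_less_2[OF _ assms, of \<pi>] by (cases "2 \<le> card \<pi>") auto
  qed (use partition_on_space[OF assms(2)] in auto)
  moreover have "finite {\<pi>. partition_on A \<pi> \<and> 2 \<le> card \<pi>}"
    using finitely_many_partition_on[OF assms(1)] by (rule rev_finite_subset) auto
  ultimately show ?thesis
    by simp
qed

lemma card_block_less:
  assumes \<pi>: "partition_on A \<pi>" and A: "finite A" and card: "2 \<le> card \<pi>" and B: "B \<in> \<pi>"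
  shows "card B < card A"
proof -
  have "\<not> \<pi> \<subseteq> {B}"
    using card card_mono[of "{B}" \<pi>] by auto
  then obtain B' where B': "B' \<in> \<pi>" "B' \<noteq> B"
    by blast
  then obtain x where "x \<in> B'"
    using partition_onD3[OF \<pi>] by (metis ex_in_conv)
  then have "x \<in> A - B"
    using partition_onD1[OF \<pi>] partition_onD2[OF \<pi>] B B' by (auto dest: disjointD)
  moreover have "B \<subseteq> A"
    using partition_onD1[OF \<pi>] B by auto
  ultimately show ?thesis
    using A by (auto intro: psubset_card_mono)
qed

lemma partition_on_image:
  assumes "inj_on f A" "partition_on A \<pi>"
  shows "partition_on (f ` A) ((`) f ` \<pi>)" "card ((`) f ` \<pi>) = card \<pi>"
proof -
  have "(`) f ` \<pi> - {{}} = (`) f ` \<pi>"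
    using partition_onD3[OF assms(2)] by auto
  then show "partition_on (f ` A) ((`) f ` \<pi>)"
    using partition_on_inj_image[OF assms(2,1)] by simp
  have "inj_on ((`) f) \<pi>"
    using inj_on_image[of f \<pi>] partition_onD1[OF assms(2)] assms(1) by simp
  then show "card ((`) f ` \<pi>) = card \<pi>"
    by (rule card_image)
qed

lemma sum_partition_on_permutes_image:
  assumes "\<tau> permutes A"
  shows "(\<Sum>\<pi>\<in>{\<pi>. partition_on A \<pi> \<and> 2 \<le> card \<pi>}. f ((`) ((`) \<tau>) \<pi>))
    = (\<Sum>\<pi>\<in>{\<pi>. partition_on A \<pi> \<and> 2 \<le> card \<pi>}. f \<pi>)"
proof (rule sum.reindex_bij_betw)
  have maps: "(`) ((`) \<rho>) ` {\<pi>. partition_on A \<pi> \<and> 2 \<le> card \<pi>} \<subseteq> {\<pi>. partition_on A \<pi> \<and> 2 \<le> card \<pi>}"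
    if \<rho>: "\<rho> permutes A" for \<rho>
  proof -
    have "inj_on \<rho> A"
      using permutes_inj[OF \<rho>] by (rule inj_on_subset) simp
    then show ?thesis
      using partition_on_image[of \<rho> A] permutes_image[OF \<rho>] by auto
  qed
  have inverse: "(`) ((`) \<rho>') ((`) ((`) \<rho>) \<pi>) = \<pi>" if "\<rho>' \<circ> \<rho> = id" for \<rho> \<rho>' :: "'a \<Rightarrow> 'a" and \<pi>
    using that by (simp add: image_comp)
  show "bij_betw ((`) ((`) \<tau>)) {\<pi>. partition_on A \<pi> \<and> 2 \<le> card \<pi>} {\<pi>. partition_on A \<pi> \<and> 2 \<le> card \<pi>}"
    using maps[OF assms] maps[OF permutes_inv[OF assms]]
      inverse[OF permutes_inv_o(1)[OF assms]] inverse[OF permutes_inv_o(2)[OF assms]]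
    by (intro bij_betw_byWitness[where f' = "(`) ((`) (inv \<tau>))"]) auto
qed

locale symmetric_family =
  fixes P :: "nat \<Rightarrow> (nat \<Rightarrow> nat) \<Rightarrow> real" and N :: nat
  assumes local: "tuple_local k (P k)"
    and symmetric: "k \<le> N \<Longrightarrow> tuple_symmetric k (P k)"
begin

abbreviation G :: "nat \<Rightarrow> (nat \<Rightarrow> nat) \<Rightarrow> real" where
  "G \<equiv> corrG P"

lemma G_local: "tuple_local k (G k)"
  by (rule corrG_local[OF local])

lemma corrG_term_eq_block_values:
  assumes \<sigma>: "\<sigma> permutes {2..k}" and l: "l \<in> {1..k-1}" and "k \<le> N"
    and sym: "tuple_symmetric l (G l)"
  shows "G l (q \<circ> \<sigma>) * P (k - l) (q \<circ> \<sigma> \<circ> (+) l)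
    = block_value G q (insert 1 (\<sigma> ` {2..l})) * block_value P q ({2..k} - \<sigma> ` {2..l})"
proof -
  have inj: "inj \<sigma>"
    using \<sigma> by (rule permutes_inj)
  have "\<sigma> ` {1..l} = insert 1 (\<sigma> ` {2..l})"
  proof -
    have "{1..l} = insert 1 {2..l}"
      using l by auto
    then show ?thesis
      using permutes_not_in[OF \<sigma>, of 1] by simp
  qed
  moreover have "G l (q \<circ> \<sigma>) = block_value G q (\<sigma> ` {1..l})"
    using block_value_eq_comp_bij[where F = G and n = l, OF G_local sym] inj_on_imp_bij_betw[OF inj_on_subset[OF inj]]
    by simp
  moreover have "\<sigma> ` {l+1..k} = {2..k} - \<sigma> ` {2..l}"
  proof -
    have "{l+1..k} = {2..k} - {2..l}"
      using l by auto
    then show ?thesis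
      using permutes_image[OF \<sigma>] by (simp add: image_set_diff[OF inj])
  qed
  moreover have "P (k - l) (q \<circ> \<sigma> \<circ> (+) l) = block_value P q (\<sigma> ` {l+1..k})"
  proof -
    have "(+) l ` {1..k-l} = {l+1..k}"
      using l by simp arith
    then have "(\<sigma> \<circ> (+) l) ` {1..k-l} = \<sigma> ` {l+1..k}"
      by (simp only: image_comp[symmetric])
    moreover have "inj_on (\<sigma> \<circ> (+) l) {1..k-l}"
      by (rule comp_inj_on) (auto intro: inj_on_subset[OF inj])
    ultimately have "bij_betw (\<sigma> \<circ> (+) l) {1..k-l} (\<sigma> ` {l+1..k})"
      by (simp add: bij_betw_def)
    then have "P (k - l) (q \<circ> (\<sigma> \<circ> (+) l)) = block_value P q (\<sigma> ` {l+1..k})"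
      using \<open>k \<le> N\<close> by (intro block_value_eq_comp_bij[where F = P, OF local symmetric]) simp_all
    then show ?thesis
      by (simp only: o_assoc)
  qed
  ultimately show ?thesis
    by simp
qed

lemma sum_permutes_corrG_term:
  assumes l: "l \<in> {1..k-1}" and "k \<le> N" and sym: "tuple_symmetric l (G l)"
  shows "(\<Sum>\<sigma>\<in>{\<sigma>. \<sigma> permutes {2..k}}.
      1 / (fact (l - 1) * fact (k - l)) * G l (q \<circ> \<sigma>) * P (k - l) (q \<circ> \<sigma> \<circ> (+) l))
    = (\<Sum>S\<in>{S. S \<subseteq> {2..k} \<and> card S = l - 1}.
      block_value G q (insert 1 S) * block_value P q ({2..k} - S))"
proof -
  define F where "F S = block_value G q (insert 1 S) * block_value P q ({2..k} - S)" for S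
  have "(\<Sum>\<sigma>\<in>{\<sigma>. \<sigma> permutes {2..k}}.
      1 / (fact (l - 1) * fact (k - l)) * G l (q \<circ> \<sigma>) * P (k - l) (q \<circ> \<sigma> \<circ> (+) l))
      = 1 / (fact (l - 1) * fact (k - l)) * (\<Sum>\<sigma>\<in>{\<sigma>. \<sigma> permutes {2..k}}. F (\<sigma> ` {2..l}))"
    unfolding sum_distrib_left
    by (rule sum.cong[OF refl]) (simp add: F_def mult.assoc corrG_term_eq_block_values[OF _ l \<open>k \<le> N\<close> sym])
  also have "(\<Sum>\<sigma>\<in>{\<sigma>. \<sigma> permutes {2..k}}. F (\<sigma> ` {2..l}))
      = fact (l - 1) * fact (k - l) * (\<Sum>S\<in>{S. S \<subseteq> {2..k} \<and> card S = l - 1}. F S)"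
  proof -
    have "{2..l} \<subseteq> {2..k}" "card {2..l} = l - 1" "card {2..k} - card {2..l} = k - l"
      using l by auto
    then show ?thesis
      using sum_permutes_image[of "{2..k}" "{2..l}" F] by simp
  qed
  also have "1 / (fact (l - 1) * fact (k - l)) *
      (fact (l - 1) * fact (k - l) * (\<Sum>S\<in>{S. S \<subseteq> {2..k} \<and> card S = l - 1}. F S))
      = (\<Sum>S\<in>{S. S \<subseteq> {2..k} \<and> card S = l - 1}. F S)"
    by simp
  finally show ?thesis
    by (simp only: F_def)
qed

lemma corrG_eq_sum_proper_subsets:
  assumes k: "2 \<le> k" "k \<le> N" and sym: "\<And>l. l < k \<Longrightarrow> tuple_symmetric l (G l)"
  shows "G k q = P k q - (\<Sum>S\<in>Pow {2..k} - {{2..k}}.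
      block_value G q (insert 1 S) * block_value P q ({2..k} - S))"
proof -
  define F where "F S = block_value G q (insert 1 S) * block_value P q ({2..k} - S)" for S
  have "G k q = P k q - (\<Sum>\<sigma>\<in>{\<sigma>. \<sigma> permutes {2..k}}. \<Sum>l\<in>{1..k-1}.
      1 / (fact (l - 1) * fact (k - l)) * G l (q \<circ> \<sigma>) * P (k - l) (q \<circ> \<sigma> \<circ> (+) l))"
    by (rule corrG_unfold[OF k(1)])
  also have "(\<Sum>\<sigma>\<in>{\<sigma>. \<sigma> permutes {2..k}}. \<Sum>l\<in>{1..k-1}.
      1 / (fact (l - 1) * fact (k - l)) * G l (q \<circ> \<sigma>) * P (k - l) (q \<circ> \<sigma> \<circ> (+) l))
      = (\<Sum>l\<in>{1..k-1}. \<Sum>S\<in>{S. S \<subseteq> {2..k} \<and> card S = l - 1}. F S)"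
    unfolding F_def
  proof (subst sum.swap, rule sum.cong[OF refl])
    fix l assume l: "l \<in> {1..k-1}"
    then have "tuple_symmetric l (G l)"
      using k(1) by (intro sym) auto
    then show "(\<Sum>\<sigma>\<in>{\<sigma>. \<sigma> permutes {2..k}}.
        1 / (fact (l - 1) * fact (k - l)) * G l (q \<circ> \<sigma>) * P (k - l) (q \<circ> \<sigma> \<circ> (+) l))
      = (\<Sum>S\<in>{S. S \<subseteq> {2..k} \<and> card S = l - 1}.
        block_value G q (insert 1 S) * block_value P q ({2..k} - S))"
      by (rule sum_permutes_corrG_term[OF l k(2)])
  qed
  also have "\<dots> = (\<Sum>m<card {2..k}. \<Sum>S\<in>{S. S \<subseteq> {2..k} \<and> card S = m}. F S)"
    by (subst sum_bounds_lt_plus1[symmetric]) simp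
  also have "\<dots> = (\<Sum>S\<in>Pow {2..k} - {{2..k}}. F S)"
    by (rule sum_proper_subsets_by_card) simp
  finally show ?thesis
    by (simp add: F_def)
qed

lemma block_value_split_relabel:
  assumes e: "bij_betw e {1..k} T" and "k \<le> N" and sym: "\<And>l. l < k \<Longrightarrow> tuple_symmetric l (G l)"
    and S: "S \<subseteq> {2..k}" "S \<noteq> {2..k}"
  shows "block_value G (r \<circ> e) (insert 1 S) * block_value P (r \<circ> e) ({2..k} - S)
    = block_value G r (insert (e 1) (e ` S)) * block_value P r (T - insert (e 1) (e ` S))"
proof -
  have inj: "inj_on e {1..k}"
    using e by (rule bij_betw_imp_inj_on)
  have sub: "insert 1 S \<subseteq> {1..k}" "{2..k} - S \<subseteq> {1..k}"
    using S by auto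
  obtain x where "x \<in> {2..k} - S"
    using S psubset_imp_ex_mem[of S "{2..k}"] by auto
  then have "x \<in> {1..k}" "x \<notin> insert 1 S"
    by auto
  then have "insert 1 S \<subset> {1..k}"
    using sub(1) by blast
  then have "card (insert 1 S) < k"
    using psubset_card_mono[of "{1..k}" "insert 1 S"] by simp
  then have "block_value G (r \<circ> e) (insert 1 S) = block_value G r (e ` insert 1 S)"
    using finite_subset[OF sub(1)] inj_on_subset[OF inj sub(1)]
    by (intro block_value_comp_inj G_local sym) simp_all
  moreover have "card ({2..k} - S) \<le> N"
    using \<open>k \<le> N\<close> card_mono[of "{2..k}" "{2..k} - S"] by auto
  then have "block_value P (r \<circ> e) ({2..k} - S) = block_value P r (e ` ({2..k} - S))"
    using inj_on_subset[OF inj sub(2)] by (intro block_value_comp_inj local symmetric) auto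
  moreover have "{2..k} - S = {1..k} - insert 1 S"
    using S by auto
  then have "e ` ({2..k} - S) = e ` {1..k} - e ` insert 1 S"
    using sub(1) by (simp add: inj_on_image_set_diff[OF inj])
  then have "e ` ({2..k} - S) = T - insert (e 1) (e ` S)"
    using bij_betw_imp_surj_on[OF e] by simp
  ultimately show ?thesis
    by simp
qed

text \<open>The recursion for \<open>corrG\<close> singles out the first coordinate; under the sorted
  enumeration of \<open>T\<close> this is \<open>Min T\<close>, so no symmetry of \<open>G (card T)\<close> itself is needed.\<close>

lemma block_value_corrG_eq:
  assumes T: "finite T" "T \<noteq> {}" "card T \<le> N"
    and sym: "\<And>l. l < card T \<Longrightarrow> tuple_symmetric l (G l)"
  shows "block_value G r T = block_value P r T -
    (\<Sum>S\<in>Pow (T - {Min T}) - {T - {Min T}}.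
       block_value G r (insert (Min T) S) * block_value P r (T - insert (Min T) S))"
proof (cases "card T = 1")
  case True
  then obtain t where "T = {t}"
    by (rule card_1_singletonE)
  then show ?thesis
    by (simp add: block_value_def corrG_le_1)
next
  case False
  define k where "k = card T"
  define e where "e = (\<lambda>j. sorted_list_of_set T ! (j - 1))"
  have "card T \<noteq> 0"
    using T(1,2) by simp
  then have k: "2 \<le> k" "k \<le> N"
    using False T(3) by (simp_all add: k_def)
  have e: "bij_betw e {1..k} T"
    using bij_betw_sorted_list_of_set_nth[OF T(1)] by (simp add: e_def k_def)
  have e_1: "e 1 = Min T"
    using sorted_list_of_set_nonempty[OF T(1,2)] by (simp add: e_def)
  have "{2..k} = {1..k} - {1}"
    by auto
  then have e_rest: "e ` {2..k} = T - {Min T}"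
    using e e_1 k(1) by (simp add: inj_on_image_set_diff[OF bij_betw_imp_inj_on[OF e]] bij_betw_imp_surj_on)
  have "bij_betw ((`) e) (Pow {2..k} - {{2..k}}) (Pow (T - {Min T}) - {T - {Min T}})"
  proof (rule bij_betw_DiffI[OF bij_betw_Pow])
    show "bij_betw e {2..k} (T - {Min T})"
      using bij_betw_subset[OF e, of "{2..k}"] e_rest by auto
    show "bij_betw ((`) e) {{2..k}} {T - {Min T}}"
      using e_rest by (simp add: bij_betw_def)
  qed auto
  then have "(\<Sum>S\<in>Pow {2..k} - {{2..k}}. block_value G (r \<circ> e) (insert 1 S) * block_value P (r \<circ> e) ({2..k} - S))
      = (\<Sum>S\<in>Pow (T - {Min T}) - {T - {Min T}}.
          block_value G r (insert (Min T) S) * block_value P r (T - insert (Min T) S))"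
    using block_value_split_relabel[OF e k(2)] sym e_1 by (simp add: k_def sum.reindex_bij_betw[symmetric])
  moreover have "block_value F r T = F k (r \<circ> e)" for F
    by (simp add: block_value_def subtuple_eq_comp e_def k_def)
  ultimately show ?thesis
    using corrG_eq_sum_proper_subsets[OF k sym, of "r \<circ> e"] by (simp add: k_def)
qed

definition cluster_expansion :: "nat \<Rightarrow> bool" where
  "cluster_expansion k \<longleftrightarrow> (\<forall>r T. finite T \<longrightarrow> T \<noteq> {} \<longrightarrow> card T = k \<longrightarrow>
     block_value P r T = (\<Sum>\<pi>\<in>{\<pi>. partition_on T \<pi>}. \<Prod>B\<in>\<pi>. block_value G r B))"

lemma cluster_expansionD:
  "cluster_expansion (card T) \<Longrightarrow> finite T \<Longrightarrow> T \<noteq> {} \<Longrightarrow>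
    block_value P r T = (\<Sum>\<pi>\<in>{\<pi>. partition_on T \<pi>}. \<Prod>B\<in>\<pi>. block_value G r B)"
  unfolding cluster_expansion_def by blast

lemma cluster_expansion_step:
  assumes "k \<le> N" and sym: "\<And>l. l < k \<Longrightarrow> tuple_symmetric l (G l)"
    and expansion: "\<And>l. l < k \<Longrightarrow> cluster_expansion l"
  shows "cluster_expansion k"
  unfolding cluster_expansion_def
proof (intro allI impI)
  fix r :: "nat \<Rightarrow> nat" and T :: "nat set"
  assume T: "finite T" "T \<noteq> {}" "card T = k"
  define t where "t = Min T"
  have t: "t \<in> T"
    using T by (simp add: t_def)
  let ?expansion = "\<lambda>U. \<Sum>\<pi>\<in>{\<pi>. partition_on U \<pi>}. \<Prod>B\<in>\<pi>. block_value G r B"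
  have rest: "?expansion (T - insert t S) = block_value P r (T - insert t S)"
    if "S \<in> Pow (T - {t}) - {T - {t}}" for S
  proof -
    have "T - insert t S \<noteq> {}"
      using that by auto
    moreover have "card (T - insert t S) < k"
      using T t by (auto intro: psubset_card_mono)
    ultimately show ?thesis
      using T(1) by (simp add: cluster_expansionD expansion)
  qed
  have "?expansion T = (\<Sum>S\<in>Pow (T - {t}). block_value G r (insert t S) * ?expansion (T - insert t S))"
    by (rule sum_partition_on_split[OF T(1) t])
  also have "\<dots> = block_value G r T +
      (\<Sum>S\<in>Pow (T - {t}) - {T - {t}}. block_value G r (insert t S) * block_value P r (T - insert t S))"
  proof -
    have "insert t (T - {t}) = T" "?expansion {} = 1"
      using t by (auto simp: partition_on_empty)
    then show ?thesis
      using T(1) rest by (simp add: sum.remove[of "Pow (T - {t})" "T - {t}"])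
  qed
  also have "\<dots> = block_value P r T"
  proof -
    have "block_value G r T = block_value P r T -
        (\<Sum>S\<in>Pow (T - {t}) - {T - {t}}. block_value G r (insert t S) * block_value P r (T - insert t S))"
      by (rule block_value_corrG_eq[OF T(1,2), folded t_def]) (use T(3) \<open>k \<le> N\<close> sym in auto)
    then show ?thesis
      by simp
  qed
  finally show "block_value P r T = ?expansion T" ..
qed

lemma corrG_eq_diff_partitions:
  assumes "1 \<le> k" "cluster_expansion k"
  shows "G k r = P k r - (\<Sum>\<pi>\<in>{\<pi>. partition_on {1..k} \<pi> \<and> 2 \<le> card \<pi>}. \<Prod>B\<in>\<pi>. block_value G r B)"
proof -
  have "P k r = block_value P r {1..k}"
    by (rule block_value_atLeastAtMost[OF local, symmetric])
  also have "\<dots> = (\<Sum>\<pi>\<in>{\<pi>. partition_on {1..k} \<pi>}. \<Prod>B\<in>\<pi>. block_value G r B)"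
    using assms by (intro cluster_expansionD) auto
  also have "\<dots> = block_value G r {1..k}
      + (\<Sum>\<pi>\<in>{\<pi>. partition_on {1..k} \<pi> \<and> 2 \<le> card \<pi>}. \<Prod>B\<in>\<pi>. block_value G r B)"
    using assms(1) by (subst sum_partition_on_remove_trivial) auto
  also have "block_value G r {1..k} = G k r"
    by (rule block_value_atLeastAtMost[OF G_local])
  finally show ?thesis
    by simp
qed

lemma prod_block_value_permutes_image:
  assumes \<tau>: "\<tau> permutes {1..k}" and \<pi>: "partition_on {1..k} \<pi>" "2 \<le> card \<pi>"
    and sym: "\<And>l. l < k \<Longrightarrow> tuple_symmetric l (G l)"
  shows "(\<Prod>B\<in>(`) \<tau> ` \<pi>. block_value G q B) = (\<Prod>B\<in>\<pi>. block_value G (q \<circ> \<tau>) B)"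
proof -
  have inj: "inj_on \<tau> B" for B
    using permutes_inj[OF \<tau>] by (rule inj_on_subset) simp
  have "(\<Prod>B\<in>(`) \<tau> ` \<pi>. block_value G q B) = (\<Prod>B\<in>\<pi>. block_value G q (\<tau> ` B))"
    by (simp add: prod.reindex inj_on_image inj)
  also have "\<dots> = (\<Prod>B\<in>\<pi>. block_value G (q \<circ> \<tau>) B)"
  proof (rule prod.cong[OF refl])
    fix B assume "B \<in> \<pi>"
    then have "card B < k" "finite B"
      using card_block_less[OF \<pi>(1) _ \<pi>(2)] partition_onD1[OF \<pi>(1)] by (auto intro: finite_subset)
    then show "block_value G q (\<tau> ` B) = block_value G (q \<circ> \<tau>) B"
      by (intro block_value_comp_inj[symmetric] G_local sym inj)
  qed
  finally show ?thesis .
qed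

lemma corrG_symmetric_step:
  assumes k: "1 \<le> k" "k \<le> N" and sym: "\<And>l. l < k \<Longrightarrow> tuple_symmetric l (G l)"
    and expansion: "cluster_expansion k"
  shows "tuple_symmetric k (G k)"
  unfolding tuple_symmetric_def
proof (intro allI impI)
  fix q and \<tau> assume \<tau>: "\<tau> permutes {1..k}"
  let ?X = "{\<pi>. partition_on {1..k} \<pi> \<and> 2 \<le> card \<pi>}"
  have "(\<Sum>\<pi>\<in>?X. \<Prod>B\<in>\<pi>. block_value G q B) = (\<Sum>\<pi>\<in>?X. \<Prod>B\<in>(`) \<tau> ` \<pi>. block_value G q B)"
    by (rule sum_partition_on_permutes_image[OF \<tau>, symmetric])
  also have "\<dots> = (\<Sum>\<pi>\<in>?X. \<Prod>B\<in>\<pi>. block_value G (q \<circ> \<tau>) B)"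
    by (rule sum.cong[OF refl]) (use prod_block_value_permutes_image[OF \<tau> _ _ sym] in auto)
  finally show "G k (q \<circ> \<tau>) = G k q"
    using corrG_eq_diff_partitions[OF k(1) expansion] tuple_symmetricD[OF symmetric[OF k(2)] \<tau>]
    by simp
qed

lemma corrG_symmetric_and_cluster_expansion:
  "k \<le> N \<Longrightarrow> tuple_symmetric k (G k) \<and> cluster_expansion k"
proof (induction k rule: less_induct)
  case (less k)
  have expansion: "cluster_expansion k"
    by (rule cluster_expansion_step[OF less.prems]) (use less in auto)
  have "tuple_symmetric k (G k)"
  proof (cases "k = 0")
    case True
    then show ?thesis
      using symmetric[of 0] by (simp add: tuple_symmetric_def corrG_le_1)
  next
    case False
    show ?thesis
      by (rule corrG_symmetric_step[OF _ less.prems _ expansion]) (use False less in auto)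
  qed
  then show ?case
    using expansion ..
qed

theorem cluster_expansion_atLeastAtMost:
  assumes "k \<in> {1..N}"
  shows "P k r = (\<Sum>\<pi>\<in>{\<pi>. partition_on {1..k} \<pi>}. \<Prod>B\<in>\<pi>. block_value G r B)"
    and "G k r = P k r - (\<Sum>\<pi>\<in>{\<pi>. partition_on {1..k} \<pi> \<and> 2 \<le> card \<pi>}. \<Prod>B\<in>\<pi>. block_value G r B)"
proof -
  have expansion: "cluster_expansion k"
    using corrG_symmetric_and_cluster_expansion assms by auto
  have "P k r = block_value P r {1..k}"
    by (rule block_value_atLeastAtMost[OF local, symmetric])
  also have "\<dots> = (\<Sum>\<pi>\<in>{\<pi>. partition_on {1..k} \<pi>}. \<Prod>B\<in>\<pi>. block_value G r B)"
    using expansion assms by (intro cluster_expansionD) auto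
  finally show "P k r = (\<Sum>\<pi>\<in>{\<pi>. partition_on {1..k} \<pi>}. \<Prod>B\<in>\<pi>. block_value G r B)" .
  show "G k r = P k r - (\<Sum>\<pi>\<in>{\<pi>. partition_on {1..k} \<pi> \<and> 2 \<le> card \<pi>}. \<Prod>B\<in>\<pi>. block_value G r B)"
    using corrG_eq_diff_partitions[OF _ expansion] assms by simp
qed

end

lemma jointP_eq_0:
  assumes "i \<in> {1..N}" "r i \<notin> {0, 1}"
  shows "jointP M E N r = 0"
proof -
  have "{\<omega> \<in> space M. \<forall>i\<in>{1..N}. indicator (E i) \<omega> = real (r i)} = {}"
    using assms by (auto simp: indicator_def split: if_splits)
  then show ?thesis
    unfolding jointP_def by (metis measure_empty)
qed

text \<open>Tuples with an entry outside \<open>{0, 1}\<close> have probability 0, so the symmetry that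
  \<open>symmetric_events\<close> asserts for 0/1-tuples holds for all tuples.\<close>

lemma jointP_permute:
  assumes "symmetric_events M E N" "\<sigma> permutes {1..N}"
  shows "jointP M E N (r \<circ> \<sigma>) = jointP M E N r"
proof (cases "\<forall>i\<in>{1..N}. r i \<in> {0, 1}")
  case True
  then show ?thesis
    using assms unfolding symmetric_events_def by metis
next
  case False
  then obtain i where i: "i \<in> {1..N}" "r i \<notin> {0, 1}"
    by blast
  have "inv \<sigma> i \<in> {1..N}"
    using i(1) by (simp only: permutes_in_image[OF permutes_inv[OF assms(2)]])
  moreover have "(r \<circ> \<sigma>) (inv \<sigma> i) \<notin> {0, 1}"
    using permutes_inverses(1)[OF assms(2)] i(2) by simp
  ultimately have "jointP M E N (r \<circ> \<sigma>) = 0"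
    by (rule jointP_eq_0)
  moreover have "jointP M E N r = 0"
    using i by (rule jointP_eq_0)
  ultimately show ?thesis
    by simp
qed

lemma symmetric_family_probP:
  assumes "symmetric_events M E N"
  shows "symmetric_family (probP M E N) N"
proof
  fix k
  show "tuple_local k (probP M E N k)"
    unfolding tuple_local_def probP_def jointP_def by (auto intro!: sum.cong arg_cong[where f = "measure M"])
  assume "k \<le> N"
  show "tuple_symmetric k (probP M E N k)"
    unfolding tuple_symmetric_def
  proof (intro allI impI)
    fix q :: "nat \<Rightarrow> nat" and \<tau> assume \<tau>: "\<tau> permutes {1..k}"
    have "(\<lambda>i. if i \<le> k then (q \<circ> \<tau>) i else s i) = (\<lambda>i. if i \<le> k then q i else s i) \<circ> \<tau>" for s
    proof
      fix i
      show "(if i \<le> k then (q \<circ> \<tau>) i else s i) = ((\<lambda>i. if i \<le> k then q i else s i) \<circ> \<tau>) i"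
        using permutes_in_image[OF \<tau>, of i] permutes_not_in[OF \<tau>, of i] by (cases "i \<in> {1..k}") auto
    qed
    moreover have "\<tau> permutes {1..N}"
      using \<tau> by (rule permutes_subset) (use \<open>k \<le> N\<close> in auto)
    ultimately show "probP M E N k (q \<circ> \<tau>) = probP M E N k q"
      unfolding probP_def using jointP_permute[OF assms] by simp
  qed
qed

theorem mainTheorem3:
  fixes M :: "'a measure" and E :: "nat \<Rightarrow> 'a set" and N k :: nat and r :: "nat \<Rightarrow> nat"
  assumes "prob_space M"
    and "\<forall>i\<in>{1..N}. E i \<in> sets M"
    and "symmetric_events M E N"
    and "k \<in> {1..N}"
    and "\<forall>i\<in>{1..k}. r i \<in> {0,1}"
  shows "probP M E N k r =
           (\<Sum>\<pi>\<in>{\<pi>. partition_on {1..k} \<pi>}.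
              \<Prod>B\<in>\<pi>. corrG (probP M E N) (card B) (subtuple r B))
       \<and> corrG (probP M E N) k r =
           probP M E N k r -
           (\<Sum>\<pi>\<in>{\<pi>. partition_on {1..k} \<pi> \<and> card \<pi> \<ge> 2}.
              \<Prod>B\<in>\<pi>. corrG (probP M E N) (card B) (subtuple r B))"
proof -
  interpret symmetric_family "probP M E N" N
    by (rule symmetric_family_probP[OF assms(3)])
  show ?thesis
    using cluster_expansion_atLeastAtMost[OF assms(4)] by (simp add: block_value_def)
qed

end
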